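(* If $G$ is a triangle-free graph with minimum degree $\delta(G)\ge 3$, then ${\rm gp}_{\rm d}(G)=0$.
   Context: For $S\subseteq V(G)$, two vertices $u,v$ are $S$-positionable if every shortest $u,v$-path $P$ satisfies $V(P)\cap S\subseteq\{u,v\}$. $S$ is a general position set if every two vertices of $S$ are $S$-positionable, and $S$ is a dual general position set if it is a general position set and every two vertices $u,v\in V(G)\setminus S$ are $S$-positionable. ${\rm gp}_{\rm d}(G)$ is the maximum size of a dual general position set of $G$. *)

theory Defs
  imports Main
begin

definition simple_graph :: "'a set \<Rightarrow> ('a \<Rightarrow> 'a \<Rightarrow> bool) \<Rightarrow> bool" where
  "simple_graph V E \<longleftrightarrow> finite V \<and> (\<forall>x y. E x y \<longrightarrow> E y x) \<and> (\<forall>x. \<not> E x x)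
     \<and> (\<forall>x y. E x y \<longrightarrow> x \<in> V \<and> y \<in> V)"

definition is_path :: "'a set \<Rightarrow> ('a \<Rightarrow> 'a \<Rightarrow> bool) \<Rightarrow> 'a list \<Rightarrow> bool" where
  "is_path V E P \<longleftrightarrow> P \<noteq> [] \<and> set P \<subseteq> V \<and> distinct P \<and> successively E P"

definition uv_path :: "'a set \<Rightarrow> ('a \<Rightarrow> 'a \<Rightarrow> bool) \<Rightarrow> 'a \<Rightarrow> 'a \<Rightarrow> 'a list \<Rightarrow> bool" where
  "uv_path V E u v P \<longleftrightarrow> is_path V E P \<and> hd P = u \<and> last P = v"

definition shortest_path :: "'a set \<Rightarrow> ('a \<Rightarrow> 'a \<Rightarrow> bool) \<Rightarrow> 'a \<Rightarrow> 'a \<Rightarrow> 'a list \<Rightarrow> bool" where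
  "shortest_path V E u v P \<longleftrightarrow> uv_path V E u v P \<and>
     (\<forall>Q. uv_path V E u v Q \<longrightarrow> length P \<le> length Q)"

definition connected_graph :: "'a set \<Rightarrow> ('a \<Rightarrow> 'a \<Rightarrow> bool) \<Rightarrow> bool" where
  "connected_graph V E \<longleftrightarrow> (\<forall>u\<in>V. \<forall>v\<in>V. \<exists>P. uv_path V E u v P)"

definition triangle_free :: "'a set \<Rightarrow> ('a \<Rightarrow> 'a \<Rightarrow> bool) \<Rightarrow> bool" where
  "triangle_free V E \<longleftrightarrow> \<not> (\<exists>x\<in>V. \<exists>y\<in>V. \<exists>z\<in>V. E x y \<and> E y z \<and> E x z)"

definition degree :: "'a set \<Rightarrow> ('a \<Rightarrow> 'a \<Rightarrow> bool) \<Rightarrow> 'a \<Rightarrow> nat" where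
  "degree V E v = card {u\<in>V. E v u}"

definition positionable :: "'a set \<Rightarrow> ('a \<Rightarrow> 'a \<Rightarrow> bool) \<Rightarrow> 'a set \<Rightarrow> 'a \<Rightarrow> 'a \<Rightarrow> bool" where
  "positionable V E S u v \<longleftrightarrow> (\<forall>P. shortest_path V E u v P \<longrightarrow> set P \<inter> S \<subseteq> {u, v})"

definition gp_set :: "'a set \<Rightarrow> ('a \<Rightarrow> 'a \<Rightarrow> bool) \<Rightarrow> 'a set \<Rightarrow> bool" where
  "gp_set V E S \<longleftrightarrow> S \<subseteq> V \<and> (\<forall>u\<in>S. \<forall>v\<in>S. u \<noteq> v \<longrightarrow> positionable V E S u v)"

definition dual_gp_set :: "'a set \<Rightarrow> ('a \<Rightarrow> 'a \<Rightarrow> bool) \<Rightarrow> 'a set \<Rightarrow> bool" where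
  "dual_gp_set V E S \<longleftrightarrow> gp_set V E S \<and>
     (\<forall>u\<in>V - S. \<forall>v\<in>V - S. u \<noteq> v \<longrightarrow> positionable V E S u v)"

definition gp_d :: "'a set \<Rightarrow> ('a \<Rightarrow> 'a \<Rightarrow> bool) \<Rightarrow> nat" where
  "gp_d V E = Max {card S | S. dual_gp_set V E S}"

end

theory Submission
  imports Defs
begin

text \<open>Let S be a dual general position set and w \<in> S. Among the at least three
neighbours of w, two distinct ones u, v lie on the same side of S. Since the graph
is triangle-free, u and v are not adjacent, so u w v is a shortest u,v-path; its inner
vertex w \<in> S contradicts the S-positionability of u and v. Hence S is empty, and the
empty set is trivially a dual general position set.\<close>

lemma shortest_path_length_two:
  assumes sg: "simple_graph V E"
    and "E u w" "E w v" "u \<noteq> v" "\<not> E u v"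
  shows "shortest_path V E u v [u, w, v]"
proof -
  have "u \<in> V" "v \<in> V" "w \<in> V" "u \<noteq> w" "w \<noteq> v"
    using sg assms(2,3) unfolding simple_graph_def by blast+
  then have path: "uv_path V E u v [u, w, v]"
    using assms(2-4) unfolding uv_path_def is_path_def by auto
  have "3 \<le> length Q" if Q: "uv_path V E u v Q" for Q
  proof (cases Q)
    case Nil
    then show ?thesis using Q unfolding uv_path_def is_path_def by simp
  next
    case (Cons a Q')
    \<comment> \<open>the rule of remdups_adj splits Q' into [], [x] and x # y # ys\<close>
    then show ?thesis
      using Q assms(4,5) unfolding uv_path_def is_path_def
      by (cases Q' rule: remdups_adj.cases) auto
  qed
  then show ?thesis
    using path unfolding shortest_path_def by (simp add: numeral_3_eq_3)
qed

lemma obtain_two_on_same_side: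
  assumes "finite N" "3 \<le> card N"
  obtains u v where "u \<in> N" "v \<in> N" "u \<noteq> v" "u \<in> S \<longleftrightarrow> v \<in> S"
proof -
  have "card N = card (N \<inter> S) + card (N - S)"
    using assms(1) by (metis card_Int_Diff)
  then consider "\<not> card (N \<inter> S) \<le> Suc 0" | "\<not> card (N - S) \<le> Suc 0"
    using assms(2) by linarith
  then show ?thesis
    using that assms(1) by cases (auto simp: card_le_Suc0_iff_eq)
qed

lemma dual_gp_set_positionable_same_side:
  assumes "dual_gp_set V E S" "u \<in> V" "v \<in> V" "u \<noteq> v" "u \<in> S \<longleftrightarrow> v \<in> S"
  shows "positionable V E S u v"
  using assms unfolding dual_gp_set_def gp_set_def by blast

lemma dual_gp_set_empty: "dual_gp_set V E {}"
  unfolding dual_gp_set_def gp_set_def positionable_def by auto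

lemma triangle_free_dual_gp_set_eq_empty:
  assumes sg: "simple_graph V E" and tf: "triangle_free V E"
    and deg: "\<forall>v\<in>V. 3 \<le> degree V E v"
    and S: "dual_gp_set V E S"
  shows "S = {}"
proof (rule ccontr)
  assume "S \<noteq> {}"
  then obtain w where "w \<in> S" by blast
  have "w \<in> V" using S \<open>w \<in> S\<close> unfolding dual_gp_set_def gp_set_def by blast
  let ?N = "{u \<in> V. E w u}"
  have "finite ?N" using sg unfolding simple_graph_def by simp
  moreover have "3 \<le> card ?N" using deg \<open>w \<in> V\<close> unfolding degree_def by blast
  ultimately obtain u v where uv: "u \<in> ?N" "v \<in> ?N" "u \<noteq> v" "u \<in> S \<longleftrightarrow> v \<in> S"
    by (rule obtain_two_on_same_side)
  have "E u w" "E w v" "w \<noteq> u" "w \<noteq> v"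
    using sg uv unfolding simple_graph_def by blast+
  moreover have "\<not> E u v"
    using tf uv \<open>w \<in> V\<close> \<open>E u w\<close> unfolding triangle_free_def by blast
  ultimately have "shortest_path V E u v [u, w, v]"
    using shortest_path_length_two[OF sg] uv(3) by blast
  moreover have "positionable V E S u v"
    using dual_gp_set_positionable_same_side[OF S] uv by blast
  moreover have "w \<in> set [u, w, v] \<inter> S" using \<open>w \<in> S\<close> by simp
  ultimately show False
    using \<open>w \<noteq> u\<close> \<open>w \<noteq> v\<close> unfolding positionable_def by blast
qed

theorem mainTheorem9:
  fixes V :: "'a set" and E :: "'a \<Rightarrow> 'a \<Rightarrow> bool"
  assumes "simple_graph V E"
    and "connected_graph V E"
    and "triangle_free V E"
    and "\<forall>v\<in>V. degree V E v \<ge> 3"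
  shows "gp_d V E = 0"
proof -
  have "dual_gp_set V E S \<longleftrightarrow> S = {}" for S
    using triangle_free_dual_gp_set_eq_empty[OF assms(1,3,4)] dual_gp_set_empty by blast
  then have "{card S | S. dual_gp_set V E S} = {0}" by simp
  then show ?thesis unfolding gp_d_def by simp
qed

end
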